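(* For $p\in\mathbb{R}$, the function $h_p(x)=(1-x)^pK(x)$ is log-concave on $(0,1)$ if and only if $p\ge 7/32$, and log-convex on $(0,1)$ if and only if $p\le 0$.
   Context: $K(x)={\cal K}(\sqrt x)=\frac\pi2\,{}_2F_1(1/2,1/2;1;x)$ for $x\in[0,1)$, where ${\cal K}(r)=\int_0^{\pi/2}(1-r^2\sin^2t)^{-1/2}dt$ is the complete elliptic integral of the first kind. *)

theory Defs
  imports "HOL-Analysis.Analysis"
begin

definition ellK :: "real \<Rightarrow> real" where
  "ellK r = integral {0..pi/2} (\<lambda>t. 1 / sqrt (1 - r\<^sup>2 * (sin t)\<^sup>2))"

definition K :: "real \<Rightarrow> real" where
  "K x = ellK (sqrt x)"

definition h :: "real \<Rightarrow> real \<Rightarrow> real" where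
  "h p x = (1 - x) powr p * K x"

definition log_concave_on :: "real set \<Rightarrow> (real \<Rightarrow> real) \<Rightarrow> bool" where
  "log_concave_on S f \<longleftrightarrow> (\<forall>x\<in>S. f x > 0) \<and> concave_on S (\<lambda>x. ln (f x))"

definition log_convex_on :: "real set \<Rightarrow> (real \<Rightarrow> real) \<Rightarrow> bool" where
  "log_convex_on S f \<longleftrightarrow> (\<forall>x\<in>S. f x > 0) \<and> convex_on S (\<lambda>x. ln (f x))"

end

theory Submission
  imports Defs "HOL-Real_Asymp.Real_Asymp"
begin

text \<open>
  Write M_k(x) for the integral over [0, pi/2] of sin^(2k) t / sqrt (1 - x sin^2 t), so that K = M_0.
  Differentiating under the integral sign gives (ln h_p)'' = (Phi - p) / (1 - x)^2 with
  Phi = (1 - x)^2 (ln K)'', and two integrations by parts turn Phi K^2 into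
  3/4 M_0 (M_0 - 2 M_1 + M_2) - 1/4 (M_0 - M_1)^2.
  Cauchy-Schwarz gives Phi >= 0. The bound Phi <= 7/32 follows from the three-term recurrence
  between consecutive M_k together with the positivity of the moments of y (y - 1/2)^2 and
  y (1 - y) (y - 1/2)^2, where y = sin^2 t. Both bounds are sharp: Phi(0) = 7/32, and
  Phi <= 3 pi / (8 K) tends to 0 as x -> 1, since K grows like - ln (1 - x) / 2.
\<close>

lemma convex_on_open_interval_iff_deriv2_nonneg:
  fixes f f' f'' :: "real \<Rightarrow> real"
  assumes f': "\<And>x. x \<in> {a<..<b} \<Longrightarrow> (f has_real_derivative f' x) (at x)"
    and f'': "\<And>x. x \<in> {a<..<b} \<Longrightarrow> (f' has_real_derivative f'' x) (at x)"
  shows "convex_on {a<..<b} f \<longleftrightarrow> (\<forall>x\<in>{a<..<b}. 0 \<le> f'' x)"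
proof
  assume convex: "convex_on {a<..<b} f"
  have tangent: "f' x * (y - x) \<le> f y - f x" if "x \<in> {a<..<b}" "y \<in> {a<..<b}" for x y
    using that by (intro convex_on_imp_above_tangent[OF convex])
      (auto simp: interior_open intro!: has_field_derivative_at_within f')
  show "\<forall>x\<in>{a<..<b}. 0 \<le> f'' x"
  proof (rule ccontr)
    assume "\<not> (\<forall>x\<in>{a<..<b}. 0 \<le> f'' x)"
    then obtain x where x: "x \<in> {a<..<b}" "f'' x < 0" by auto
    obtain d where d: "d > 0" "\<And>h. 0 < h \<Longrightarrow> h < d \<Longrightarrow> f' (x + h) < f' x"
      using DERIV_neg_dec_right[OF f''[OF x(1)] x(2)] by blast
    define h where "h = min (d / 2) ((b - x) / 2)"
    have h: "0 < h" "h < d" "x + h \<in> {a<..<b}"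
      using x d by (auto simp: h_def min_def field_simps)
    have "f' x * h \<le> f (x + h) - f x" "f' (x + h) * (- h) \<le> f x - f (x + h)"
      using tangent[OF x(1) h(3)] tangent[OF h(3) x(1)] by simp_all
    moreover have "0 < (f' x - f' (x + h)) * h"
      using d(2)[OF h(1,2)] h(1) by simp
    ultimately show False by (simp add: algebra_simps)
  qed
next
  assume "\<forall>x\<in>{a<..<b}. 0 \<le> f'' x"
  then show "convex_on {a<..<b} f"
    by (intro f''_ge0_imp_convex[of _ _ f' f'']) (auto intro: f' f'')
qed

lemma concave_on_open_interval_iff_deriv2_nonpos:
  fixes f f' f'' :: "real \<Rightarrow> real"
  assumes f': "\<And>x. x \<in> {a<..<b} \<Longrightarrow> (f has_real_derivative f' x) (at x)"
    and f'': "\<And>x. x \<in> {a<..<b} \<Longrightarrow> (f' has_real_derivative f'' x) (at x)"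
  shows "concave_on {a<..<b} f \<longleftrightarrow> (\<forall>x\<in>{a<..<b}. f'' x \<le> 0)"
proof -
  have "convex_on {a<..<b} (\<lambda>x. - f x) \<longleftrightarrow> (\<forall>x\<in>{a<..<b}. 0 \<le> - f'' x)"
    by (rule convex_on_open_interval_iff_deriv2_nonneg) (auto intro!: derivative_eq_intros f' f'')
  then show ?thesis
    unfolding concave_on_def by auto
qed

lemma has_integral_eq_antiderivative_diff:
  fixes f g :: "real \<Rightarrow> real"
  assumes "a \<le> b" and "\<And>t. t \<in> {a..b} \<Longrightarrow> (g has_real_derivative f t) (at t)"
    and "(f has_integral I) {a..b}"
  shows "I = g b - g a"
proof -
  have "(f has_integral g b - g a) {a..b}"
    using assms(1,2) by (intro fundamental_theorem_of_calculus)
      (auto simp flip: has_real_derivative_iff_has_vector_derivative intro: has_field_derivative_at_within)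
  then show ?thesis
    using assms(3) has_integral_unique by blast
qed

section \<open>Moments of the elliptic integrand\<close>

definition ell_denom :: "real \<Rightarrow> real \<Rightarrow> real" where
  "ell_denom x t = 1 - x * sin t ^ 2"

definition ell_integrand :: "real \<Rightarrow> nat \<Rightarrow> real \<Rightarrow> real \<Rightarrow> real" where
  "ell_integrand a k x t = (sin t ^ 2) ^ k * ell_denom x t powr - a"

definition ell_moment :: "real \<Rightarrow> nat \<Rightarrow> real \<Rightarrow> real" where
  "ell_moment a k x = integral {0..pi/2} (ell_integrand a k x)"

abbreviation K_moment :: "nat \<Rightarrow> real \<Rightarrow> real" where
  "K_moment k \<equiv> ell_moment (1/2) k"

lemma ell_denom_pos: "x < 1 \<Longrightarrow> 0 < ell_denom x t"
proof -
  assume x: "x < 1"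
  have "sin t ^ 2 \<le> 1"
    by (simp add: abs_square_le_1)
  then have "x * sin t ^ 2 < 1"
    using x mult_left_le[of "sin t ^ 2" x] mult_nonpos_nonneg[of x "sin t ^ 2"]
    by (cases "0 \<le> x") auto
  then show ?thesis
    by (simp add: ell_denom_def)
qed

lemma ell_denom_has_derivative_t:
  "((\<lambda>t. ell_denom x t) has_real_derivative - (2 * x * sin t * cos t)) (at t)"
  unfolding ell_denom_def by (auto intro!: derivative_eq_intros)

lemma ell_denom_has_derivative_x:
  "((\<lambda>x. ell_denom x t) has_real_derivative - (sin t ^ 2)) (at x)"
  unfolding ell_denom_def by (auto intro!: derivative_eq_intros)

lemma continuous_on_ell_integrand:
  "continuous_on ({..<1} \<times> UNIV) (\<lambda>(x, t). ell_integrand a k x t)"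
proof -
  have "continuous_on ({..<1} \<times> UNIV) (\<lambda>z. ell_denom (fst z) (snd z))"
    unfolding ell_denom_def by (intro continuous_intros)
  then show ?thesis
    unfolding ell_integrand_def case_prod_beta
    by (intro continuous_intros) (auto dest: ell_denom_pos[THEN less_imp_neq])
qed

lemma continuous_on_ell_integrand_t:
  assumes "x < 1"
  shows "continuous_on S (ell_integrand a k x)"
  using ell_denom_pos[OF assms] unfolding ell_integrand_def ell_denom_def
  by (intro continuous_intros) (metis less_irrefl)

lemma ell_integrand_has_integral:
  "x < 1 \<Longrightarrow> (ell_integrand a k x has_integral ell_moment a k x) {0..pi/2}"
  unfolding ell_moment_def
  using continuous_on_ell_integrand_t integrable_continuous_interval has_integral_integral by blast

lemma ell_integrand_has_derivative_x:
  assumes "x < 1"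
  shows "((\<lambda>x. ell_integrand a k x t) has_real_derivative a * ell_integrand (a + 1) (Suc k) x t) (at x)"
  unfolding ell_integrand_def using ell_denom_pos[OF assms, of t]
  by (auto intro!: derivative_eq_intros ell_denom_has_derivative_x simp: powr_diff powr_minus field_simps)

lemma ell_moment_has_derivative:
  assumes x: "x < 1"
  shows "(ell_moment a k has_real_derivative a * ell_moment (a + 1) (Suc k) x) (at x)"
proof -
  have "continuous_on ({..<1} \<times> cbox 0 (pi/2)) (\<lambda>(x, t). a * ell_integrand (a + 1) (Suc k) x t)"
    unfolding case_prod_beta
    by (intro continuous_intros continuous_on_subset[OF continuous_on_ell_integrand[unfolded case_prod_beta]])
      auto
  then have "(ell_moment a k has_real_derivative
      integral (cbox 0 (pi/2)) (\<lambda>t. a * ell_integrand (a + 1) (Suc k) x t)) (at x within {..<1})"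
    unfolding ell_moment_def cbox_interval[symmetric] using x
    by (intro leibniz_rule_field_derivative)
      (auto intro: has_field_derivative_at_within ell_integrand_has_derivative_x
        integrable_continuous_interval continuous_on_ell_integrand_t)
  then show ?thesis
    using at_within_open[of x "{..<1}"] x by (simp add: ell_moment_def)
qed

lemma ell_moment_raise:
  assumes x: "x < 1"
  shows "ell_moment a k x = ell_moment (a + 1) k x - x * ell_moment (a + 1) (Suc k) x"
proof -
  have "ell_integrand a k x = (\<lambda>t. ell_integrand (a + 1) k x t - x * ell_integrand (a + 1) (Suc k) x t)"
  proof
    fix t
    define P where "P = ell_denom x t powr - (a + 1)"
    have e: "ell_denom x t powr - a = ell_denom x t * P"
      unfolding P_def using powr_mult_base[of "ell_denom x t" "- (a + 1)"] ell_denom_pos[OF x, of t] by simp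
    show "ell_integrand a k x t = ell_integrand (a + 1) k x t - x * ell_integrand (a + 1) (Suc k) x t"
      unfolding ell_integrand_def P_def[symmetric] e unfolding ell_denom_def power_Suc by algebra
  qed
  then have "(ell_integrand a k x has_integral ell_moment (a + 1) k x - x * ell_moment (a + 1) (Suc k) x)
      {0..pi/2}"
    by (simp only:) (intro has_integral_diff has_integral_mult_right ell_integrand_has_integral x)
  then show ?thesis
    by (rule has_integral_unique[OF ell_integrand_has_integral[OF x]])
qed

lemma sin_pow_cos_ell_denom_has_derivative:
  assumes x: "x < 1"
  shows "((\<lambda>t. sin t ^ (2 * n + 1) * cos t * ell_denom x t powr (1/2)) has_real_derivative
     (2 * real n + 1) * ell_integrand (1/2) n x t
     - 2 * (real n + 1) * (1 + x) * ell_integrand (1/2) (Suc n) x t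
     + (2 * real n + 3) * x * ell_integrand (1/2) (Suc (Suc n)) x t) (at t)"
proof -
  define w where "w = ell_denom x t"
  define S where "S = (sin t ^ 2) ^ n"
  define D where "D = ((2 * real n + 1) * S * cos t ^ 2 - S * sin t ^ 2) * w powr (1/2)
      - x * S * sin t ^ 2 * cos t ^ 2 * w powr -(1/2)"
  have w: "0 < w"
    unfolding w_def using ell_denom_pos[OF x] .
  have "((\<lambda>t. sin t ^ (2 * n + 1) * cos t * ell_denom x t powr (1/2)) has_real_derivative D) (at t)"
  proof -
    have "sin t ^ (2 * n) = S"
      unfolding S_def by (simp add: power_mult)
    moreover have "0 < n \<Longrightarrow> sin t * sin t ^ (n * 2 - 1) = sin t ^ (n * 2)"
      by (cases n) simp_all
    ultimately show ?thesis
      unfolding D_def using w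
      by (auto intro!: derivative_eq_intros ell_denom_has_derivative_t
          simp: w_def power2_eq_square algebra_simps)
  qed
  moreover have "D = (2 * real n + 1) * ell_integrand (1/2) n x t
     - 2 * (real n + 1) * (1 + x) * ell_integrand (1/2) (Suc n) x t
     + (2 * real n + 3) * x * ell_integrand (1/2) (Suc (Suc n)) x t"
  proof -
    define s where "s = sin t ^ 2"
    define P where "P = w powr -(1/2)"
    have e: "w powr (1/2) = w * P"
      unfolding P_def using w by (simp add: powr_mult_base)
    have W: "w = 1 - x * s"
      unfolding w_def ell_denom_def s_def ..
    show ?thesis
      unfolding D_def ell_integrand_def w_def[symmetric] cos_squared_eq e P_def[symmetric] power_Suc
        S_def[symmetric]
      unfolding s_def[symmetric] W by algebra
  qed
  ultimately show ?thesis by simp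
qed

text \<open>
  With s = sin t ^ 2 and w = ell_denom x t, the next two derivatives are
  ((1 - s) (1 - x s) - (1 - x) s) w^(-3/2) and ((1 - s)^2 (1 - x s)^2 - (1 - x)^2 s^2) w^(-5/2);
  integrated, they give ell_moment_3_2_reduce and ell_moment_5_2_reduce.
\<close>

lemma sin_cos_ell_denom_has_derivative:
  assumes x: "x < 1"
  shows "((\<lambda>t. sin t * cos t * ell_denom x t powr -(1/2)) has_real_derivative
     ell_integrand (3/2) 0 x t - 2 * ell_integrand (3/2) 1 x t + x * ell_integrand (3/2) 2 x t) (at t)"
proof -
  define w where "w = ell_denom x t"
  define D where "D = (cos t ^ 2 - sin t ^ 2) * w powr -(1/2) + x * sin t ^ 2 * cos t ^ 2 * w powr -(3/2)"
  have w: "0 < w"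
    unfolding w_def using ell_denom_pos[OF x] .
  have "((\<lambda>t. sin t * cos t * ell_denom x t powr -(1/2)) has_real_derivative D) (at t)"
    unfolding D_def using w
    by (auto intro!: derivative_eq_intros ell_denom_has_derivative_t simp: w_def power2_eq_square)
  moreover have "D = ell_integrand (3/2) 0 x t - 2 * ell_integrand (3/2) 1 x t + x * ell_integrand (3/2) 2 x t"
  proof -
    define s where "s = sin t ^ 2"
    define P where "P = w powr -(3/2)"
    have e: "w powr -(1/2) = w * P"
      unfolding P_def using w by (simp add: powr_mult_base)
    have W: "w = 1 - x * s"
      unfolding w_def ell_denom_def s_def ..
    show ?thesis
      unfolding D_def ell_integrand_def w_def[symmetric] cos_squared_eq e P_def[symmetric]
      unfolding s_def[symmetric] W by algebra
  qed
  ultimately show ?thesis by simp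
qed

lemma sin_cos_quartic_ell_denom_has_derivative:
  assumes x: "x < 1"
  shows "((\<lambda>t. sin t * cos t * (1 - 4 * x / 3 * sin t ^ 2 + x / 3 * sin t ^ 4) * ell_denom x t powr -(3/2))
    has_real_derivative
     ell_integrand (5/2) 0 x t - 2 * (1 + x) * ell_integrand (5/2) 1 x t + 6 * x * ell_integrand (5/2) 2 x t
     - 2 * x * (1 + x) * ell_integrand (5/2) 3 x t + x^2 * ell_integrand (5/2) 4 x t) (at t)"
proof -
  define w where "w = ell_denom x t"
  define q where "q = 1 - 4 * x / 3 * sin t ^ 2 + x / 3 * sin t ^ 4"
  define D where "D = ((cos t ^ 2 - sin t ^ 2) * q + sin t ^ 2 * cos t ^ 2 * (4 * x / 3 * sin t ^ 2 - 8 * x / 3))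
      * w powr -(3/2) + 3 * x * sin t ^ 2 * cos t ^ 2 * q * w powr -(5/2)"
  have w: "0 < w"
    unfolding w_def using ell_denom_pos[OF x] .
  have "((\<lambda>t. sin t * cos t * (1 - 4 * x / 3 * sin t ^ 2 + x / 3 * sin t ^ 4) * ell_denom x t powr -(3/2))
    has_real_derivative D) (at t)"
    unfolding D_def using w
    by (auto intro!: derivative_eq_intros ell_denom_has_derivative_t simp: w_def q_def) algebra
  moreover have "D = ell_integrand (5/2) 0 x t - 2 * (1 + x) * ell_integrand (5/2) 1 x t
      + 6 * x * ell_integrand (5/2) 2 x t - 2 * x * (1 + x) * ell_integrand (5/2) 3 x t
      + x^2 * ell_integrand (5/2) 4 x t"
  proof -
    define s where "s = sin t ^ 2"
    define P where "P = w powr -(5/2)"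
    have e: "w powr -(3/2) = w * P"
      unfolding P_def using w by (simp add: powr_mult_base)
    have W: "w = 1 - x * s"
      unfolding w_def ell_denom_def s_def ..
    have s4: "sin t ^ 4 = s ^ 2"
      unfolding s_def by simp
    show ?thesis
      unfolding D_def ell_integrand_def w_def[symmetric] cos_squared_eq q_def e P_def[symmetric]
      unfolding s4 s_def[symmetric] W by algebra
  qed
  ultimately show ?thesis by simp
qed

lemma ell_moment_recurrence:
  assumes x: "x < 1"
  shows "(2 * real n + 1) * K_moment n x - 2 * (real n + 1) * (1 + x) * K_moment (Suc n) x
    + (2 * real n + 3) * x * K_moment (Suc (Suc n)) x = 0" (is "?I = 0")
proof -
  have "((\<lambda>t. (2 * real n + 1) * ell_integrand (1/2) n x t
      - 2 * (real n + 1) * (1 + x) * ell_integrand (1/2) (Suc n) x t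
      + (2 * real n + 3) * x * ell_integrand (1/2) (Suc (Suc n)) x t) has_integral ?I) {0..pi/2}"
    by (intro has_integral_add has_integral_diff has_integral_mult_right ell_integrand_has_integral x)
  from has_integral_eq_antiderivative_diff[OF _ sin_pow_cos_ell_denom_has_derivative[OF x] this]
  show ?thesis by simp
qed

lemma ell_moment_3_2_reduce:
  assumes x: "x < 1"
  shows "(1 - x) * ell_moment (3/2) 1 x = K_moment 0 x - K_moment 1 x"
proof -
  have "ell_moment (3/2) 0 x - 2 * ell_moment (3/2) 1 x + x * ell_moment (3/2) 2 x = 0" (is "?I = 0")
  proof -
    have "((\<lambda>t. ell_integrand (3/2) 0 x t - 2 * ell_integrand (3/2) 1 x t + x * ell_integrand (3/2) 2 x t)
        has_integral ?I) {0..pi/2}"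
      by (intro has_integral_add has_integral_diff has_integral_mult_right ell_integrand_has_integral x)
    from has_integral_eq_antiderivative_diff[OF _ sin_cos_ell_denom_has_derivative[OF x] this]
    show ?thesis by simp
  qed
  then show ?thesis
    using ell_moment_raise[OF x, of "1/2" 0] ell_moment_raise[OF x, of "1/2" 1]
    by (simp add: numeral_eq_Suc algebra_simps)
qed

lemma ell_moment_5_2_reduce:
  assumes x: "x < 1"
  shows "(1 - x)^2 * ell_moment (5/2) 2 x
    = K_moment 0 x - 2 * K_moment 1 x + K_moment 2 x"
proof -
  have ibp: "ell_moment (5/2) 0 x - 2 * (1 + x) * ell_moment (5/2) 1 x + 6 * x * ell_moment (5/2) 2 x
      - 2 * x * (1 + x) * ell_moment (5/2) 3 x + x^2 * ell_moment (5/2) 4 x = 0" (is "?I = 0")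
  proof -
    have "((\<lambda>t. ell_integrand (5/2) 0 x t - 2 * (1 + x) * ell_integrand (5/2) 1 x t
        + 6 * x * ell_integrand (5/2) 2 x t - 2 * x * (1 + x) * ell_integrand (5/2) 3 x t
        + x^2 * ell_integrand (5/2) 4 x t) has_integral ?I) {0..pi/2}"
      by (intro has_integral_add has_integral_diff has_integral_mult_right ell_integrand_has_integral x)
    from has_integral_eq_antiderivative_diff[OF _ sin_cos_quartic_ell_denom_has_derivative[OF x] this]
    show ?thesis by simp
  qed
  have raise: "K_moment k x = ell_moment (3/2) k x - x * ell_moment (3/2) (Suc k) x"
    "ell_moment (3/2) k x = ell_moment (5/2) k x - x * ell_moment (5/2) (Suc k) x" for k
    using ell_moment_raise[OF x, of "1/2" k] ell_moment_raise[OF x, of "3/2" k] by simp_all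
  have "K_moment 0 x - 2 * K_moment 1 x + K_moment 2 x
      - (1 - x)^2 * ell_moment (5/2) 2 x = ?I"
    by (simp add: raise numeral_eq_Suc algebra_simps power2_eq_square)
  with ibp show ?thesis
    by simp
qed

section \<open>Bounds on the moments\<close>

lemma ell_moment_quartic_nonneg:
  assumes x: "x < 1"
    and nonneg: "\<And>y. 0 \<le> y \<Longrightarrow> y \<le> 1 \<Longrightarrow> 0 \<le> c0 + c1 * y + c2 * y^2 + c3 * y^3 + c4 * y^4"
  shows "0 \<le> c0 * ell_moment a 0 x + c1 * ell_moment a 1 x + c2 * ell_moment a 2 x
    + c3 * ell_moment a 3 x + c4 * ell_moment a 4 x"
proof (rule has_integral_nonneg)
  show "((\<lambda>t. c0 * ell_integrand a 0 x t + c1 * ell_integrand a 1 x t + c2 * ell_integrand a 2 x t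
      + c3 * ell_integrand a 3 x t + c4 * ell_integrand a 4 x t) has_integral
    c0 * ell_moment a 0 x + c1 * ell_moment a 1 x + c2 * ell_moment a 2 x
      + c3 * ell_moment a 3 x + c4 * ell_moment a 4 x) {0..pi/2}"
    by (intro has_integral_add has_integral_mult_right ell_integrand_has_integral x)
next
  fix t :: real
  have "sin t ^ 2 \<le> 1"
    by (simp add: abs_square_le_1)
  then have "0 \<le> (c0 + c1 * sin t ^ 2 + c2 * (sin t ^ 2)^2 + c3 * (sin t ^ 2)^3 + c4 * (sin t ^ 2)^4)
      * ell_denom x t powr - a"
    by (intro mult_nonneg_nonneg nonneg) auto
  then show "0 \<le> c0 * ell_integrand a 0 x t + c1 * ell_integrand a 1 x t + c2 * ell_integrand a 2 x t
      + c3 * ell_integrand a 3 x t + c4 * ell_integrand a 4 x t"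
    unfolding ell_integrand_def by (simp add: algebra_simps)
qed

lemma ell_moment_cauchy_schwarz:
  assumes x: "x < 1" and pos: "0 < ell_moment a 0 x"
  shows "ell_moment a 1 x ^ 2 \<le> ell_moment a 0 x * ell_moment a 2 x"
proof -
  define \<mu> where "\<mu> = ell_moment a 1 x / ell_moment a 0 x"
  have "0 \<le> \<mu>^2 * ell_moment a 0 x + (- 2 * \<mu>) * ell_moment a 1 x + 1 * ell_moment a 2 x
      + 0 * ell_moment a 3 x + 0 * ell_moment a 4 x"
  proof (rule ell_moment_quartic_nonneg[OF x])
    fix y :: real
    show "0 \<le> \<mu>^2 + (- 2 * \<mu>) * y + 1 * y^2 + 0 * y^3 + 0 * y^4"
      using zero_le_power2[of "\<mu> - y"] by (simp add: power2_eq_square algebra_simps)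
  qed
  also have "\<dots> = ell_moment a 2 x - ell_moment a 1 x ^ 2 / ell_moment a 0 x"
    unfolding \<mu>_def using pos by (simp add: field_simps power2_eq_square)
  finally show ?thesis
    using pos by (simp add: field_simps)
qed

lemma moment_linear_form_nonneg_small:
  fixes x M0 M1 M2 M3 M4 :: real
  assumes x: "0 < x" "x \<le> 2/3" and M0: "0 < M0"
    and R1: "M0 - 2 * (1 + x) * M1 + 3 * x * M2 = 0"
    and R2: "3 * M1 - 4 * (1 + x) * M2 + 5 * x * M3 = 0"
    and R3: "5 * M2 - 6 * (1 + x) * M3 + 7 * x * M4 = 0"
    and P: "0 \<le> 1/4 * M1 - 5/4 * M2 + 2 * M3 - M4"
  shows "0 \<le> x * M0 + (24 * x - 16) * (M1 - M0 / 2)"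
proof -
  define \<alpha> where "\<alpha> = 8/35 - 11 * x / 35 + 47 * x^2 / 420"
  define \<beta> where "\<beta> = - 16/35 + 24 * x / 35 - 59 * x^2 / 210 + 11 * x^3 / 420"
  have "0 \<le> x^3 * (1/4 * M1 - 5/4 * M2 + 2 * M3 - M4)"
    using P x by simp
  also have "\<dots> = \<alpha> * M0 + \<beta> * M1"
    unfolding \<alpha>_def \<beta>_def using R1 R2 R3 by algebra
  finally have P': "0 \<le> \<alpha> * M0 + \<beta> * M1" .
  have "x^3 \<le> x^2" "0 \<le> (1 - x) * (181 - 107 * x)"
    using x by (auto simp: power_decreasing)
  then have \<beta>: "\<beta> < 0"
    unfolding \<beta>_def using x by (simp add: algebra_simps power2_eq_square)
  have "0 < 192 - 258 * x + 121 * x^2"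
    using zero_le_power2[of "x - 129/121"] by (simp add: algebra_simps power2_eq_square)
  then have "0 \<le> x^2 * (192 - 258 * x + 121 * x^2) / 420 * M0"
    using M0 by simp
  moreover have "0 \<le> (16 - 24 * x) * (\<alpha> * M0 + \<beta> * M1)"
    using x P' by simp
  ultimately have "0 \<le> (16 - 24 * x) * (\<alpha> * M0 + \<beta> * M1) + x^2 * (192 - 258 * x + 121 * x^2) / 420 * M0"
    by simp
  also have "\<dots> = - \<beta> * (x * M0 + (24 * x - 16) * (M1 - M0 / 2))"
    unfolding \<alpha>_def \<beta>_def by algebra
  finally show ?thesis
    using \<beta> by (auto simp: zero_le_mult_iff mult_le_0_iff)
qed

lemma moment_linear_form_nonneg_large:
  fixes x M0 M1 M2 M3 :: real
  assumes x: "2/3 \<le> x" "x < 1" and M0: "0 < M0"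
    and R1: "M0 - 2 * (1 + x) * M1 + 3 * x * M2 = 0"
    and R2: "3 * M1 - 4 * (1 + x) * M2 + 5 * x * M3 = 0"
    and P: "0 \<le> 1/4 * M1 - M2 + M3"
  shows "0 \<le> x * M0 + (24 * x - 16) * (M1 - M0 / 2)"
proof -
  define \<alpha> where "\<alpha> = - 4/15 + x / 15"
  define \<beta> where "\<beta> = 8/15 - x / 5 + 7 * x^2 / 60"
  have "0 \<le> x^2 * (1/4 * M1 - M2 + M3)"
    using P by simp
  also have "\<dots> = \<alpha> * M0 + \<beta> * M1"
    unfolding \<alpha>_def \<beta>_def using R1 R2 by algebra
  finally have P': "- \<alpha> * M0 \<le> \<beta> * M1"
    by simp
  have "x^2 \<le> x"
    using x by (simp add: power2_eq_square mult_left_le)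
  moreover have "- \<alpha> - 3/8 * \<beta> = 1/15 + x/120 - 7/160 * x^2"
    unfolding \<alpha>_def \<beta>_def by (simp add: field_simps)
  ultimately have \<beta>: "0 < \<beta>" and \<alpha>\<beta>: "3/8 * \<beta> \<le> - \<alpha>"
    unfolding \<beta>_def using x zero_le_power2[of x] by linarith+
  have "\<beta> * (3/8 * M0) \<le> \<beta> * M1"
    using mult_right_mono[OF \<alpha>\<beta> less_imp_le[OF M0]] P' by simp
  then have "3/8 * M0 \<le> M1"
    using \<beta> by simp
  then have M1: "(24 * x - 16) * (- M0 / 8) \<le> (24 * x - 16) * (M1 - M0 / 2)"
    using x by (intro mult_left_mono) auto
  have "0 \<le> 2 * (M0 - x * M0)"
    using x M0 mult_left_le_one_le[of M0 x] by simp
  also have "\<dots> = x * M0 + (24 * x - 16) * (- M0 / 8)"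
    by (simp add: algebra_simps)
  also have "\<dots> \<le> x * M0 + (24 * x - 16) * (M1 - M0 / 2)"
    using M1 by simp
  finally show ?thesis .
qed

lemma moment_quadratic_form_nonneg:
  fixes x M0 M1 M2 M3 M4 :: real
  assumes x: "0 < x" "x < 1" and M0: "0 < M0"
    and R1: "M0 - 2 * (1 + x) * M1 + 3 * x * M2 = 0"
    and R2: "3 * M1 - 4 * (1 + x) * M2 + 5 * x * M3 = 0"
    and R3: "5 * M2 - 6 * (1 + x) * M3 + 7 * x * M4 = 0"
    and P1: "0 \<le> 1/4 * M1 - 5/4 * M2 + 2 * M3 - M4"
    and P2: "0 \<le> 1/4 * M1 - M2 + M3"
  shows "0 \<le> (8 - 9 * x) * M0^2 + 16 * (x - 1) * M0 * M1 + 8 * x * M1^2"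
proof -
  have L: "0 \<le> x * M0 + (24 * x - 16) * (M1 - M0 / 2)"
  proof (cases "x \<le> 2/3")
    case True
    show ?thesis
      by (rule moment_linear_form_nonneg_small[OF x(1) True M0 R1 R2 R3 P1])
  next
    case False
    then show ?thesis
      by (intro moment_linear_form_nonneg_large[OF _ x(2) M0 R1 R2 P2]) simp
  qed
  have "(8 - 9 * x) * M0^2 + 16 * (x - 1) * M0 * M1 + 8 * x * M1^2
      = 8 * x * (M1 - M0 / 2)^2 + M0 * (x * M0 + (24 * x - 16) * (M1 - M0 / 2))"
    by (simp add: algebra_simps power2_eq_square)
  also have "0 \<le> \<dots>"
    using x M0 L by simp
  finally show ?thesis .
qed

lemma ell_denom_powr_neg_half:
  "x < 1 \<Longrightarrow> ell_denom x t powr -(1/2) = 1 / sqrt (ell_denom x t)"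
  using ell_denom_pos[of x t] by (simp add: powr_minus_divide powr_half_sqrt)

lemma K_eq_K_moment:
  assumes "0 \<le> x" "x < 1"
  shows "K x = K_moment 0 x"
proof -
  have "ell_integrand (1/2) 0 x = (\<lambda>t. 1 / sqrt (1 - (sqrt x)\<^sup>2 * (sin t)\<^sup>2))"
    unfolding ell_integrand_def ell_denom_powr_neg_half[OF assms(2)] using assms(1)
    by (simp add: ell_denom_def)
  then show ?thesis
    unfolding K_def ellK_def ell_moment_def by simp
qed

lemma K_moment_0_ge_half_pi:
  assumes x: "0 \<le> x" "x < 1"
  shows "pi/2 \<le> K_moment 0 x"
proof (rule has_integral_le[OF _ ell_integrand_has_integral[OF x(2)]])
  show "((\<lambda>t. 1) has_integral pi/2) {0..pi/2}"
    using has_integral_const_real[of "1::real" 0 "pi/2"] by simp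
next
  fix t :: real
  have "0 < ell_denom x t" "ell_denom x t \<le> 1"
    using ell_denom_pos[OF x(2)] x(1) by (auto simp: ell_denom_def)
  then show "1 \<le> ell_integrand (1/2) 0 x t"
    by (simp add: ell_integrand_def ell_denom_powr_neg_half[OF x(2)])
qed

lemma K_moment_0_pos: "0 \<le> x \<Longrightarrow> x < 1 \<Longrightarrow> 0 < K_moment 0 x"
  using K_moment_0_ge_half_pi pi_gt_zero by (meson half_gt_zero_iff less_le_trans)

lemma K_moment_cos4_le:
  assumes x: "0 \<le> x" "x < 1"
  shows "K_moment 0 x - 2 * K_moment 1 x + K_moment 2 x \<le> pi/2"
proof (rule has_integral_le)
  show "((\<lambda>t. ell_integrand (1/2) 0 x t - 2 * ell_integrand (1/2) 1 x t + ell_integrand (1/2) 2 x t)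
      has_integral K_moment 0 x - 2 * K_moment 1 x + K_moment 2 x) {0..pi/2}"
    by (intro has_integral_add has_integral_diff has_integral_mult_right ell_integrand_has_integral x)
  show "((\<lambda>t. 1) has_integral pi/2) {0..pi/2}"
    using has_integral_const_real[of "1::real" 0 "pi/2"] by simp
next
  fix t :: real
  define s where "s = sin t ^ 2"
  have s: "0 \<le> s" "s \<le> 1"
    unfolding s_def by (auto simp: abs_square_le_1)
  have w: "0 < ell_denom x t"
    using ell_denom_pos[OF x(2)] .
  have "(1 - s)^2 \<le> 1 - s"
    using s by (simp add: power2_eq_square mult_left_le_one_le)
  also have "\<dots> \<le> sqrt (1 - s)"
    using s by (intro real_le_rsqrt) (simp add: power2_eq_square mult_left_le_one_le)
  also have "\<dots> \<le> sqrt (ell_denom x t)"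
    using s x unfolding ell_denom_def s_def[symmetric] by (simp add: mult_left_le_one_le)
  finally have "(1 - s)^2 / sqrt (ell_denom x t) \<le> 1"
    using w by simp
  moreover have "ell_integrand (1/2) 0 x t - 2 * ell_integrand (1/2) 1 x t + ell_integrand (1/2) 2 x t
      = (1 - s)^2 / sqrt (ell_denom x t)"
    unfolding ell_integrand_def ell_denom_powr_neg_half[OF x(2)] s_def[symmetric]
    using w by (simp add: field_simps power2_eq_square)
  ultimately show "ell_integrand (1/2) 0 x t - 2 * ell_integrand (1/2) 1 x t + ell_integrand (1/2) 2 x t \<le> 1"
    by simp
qed

lemma K_moment_0_ge_neg_ln:
  assumes x: "0 \<le> x" "x < 1"
  shows "- ln (1 - x) / 2 \<le> K_moment 0 x"
proof -
  define e where "e = sqrt (1 - x)"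
  have e: "0 < e" "e^2 = 1 - x"
    unfolding e_def using x by auto
  have "((\<lambda>t. 1 / (pi/2 - t + e)) has_integral (- ln (pi/2 - pi/2 + e)) - (- ln (pi/2 - 0 + e))) {0..pi/2}"
  proof (rule fundamental_theorem_of_calculus)
    fix t assume t: "t \<in> {0..pi/2}"
    have "((\<lambda>t. - ln (pi/2 - t + e)) has_real_derivative 1 / (pi/2 - t + e)) (at t)"
      using t e by (auto intro!: derivative_eq_intros simp: field_simps)
    then show "((\<lambda>t. - ln (pi/2 - t + e)) has_vector_derivative 1 / (pi/2 - t + e)) (at t within {0..pi/2})"
      by (simp add: has_real_derivative_iff_has_vector_derivative[symmetric] has_field_derivative_at_within)
  qed simp
  then have "((\<lambda>t. 1 / (pi/2 - t + e)) has_integral ln (pi/2 + e) - ln e) {0..pi/2}"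
    by simp
  then have "ln (pi/2 + e) - ln e \<le> K_moment 0 x"
  proof (rule has_integral_le[OF _ ell_integrand_has_integral[OF x(2)]])
    fix t :: real assume t: "t \<in> {0..pi/2}"
    have "cos t = sin (pi/2 - t)"
      using cos_sin_eq[of t] by simp
    also have "\<dots> \<le> pi/2 - t"
      using t by (intro sin_x_le_x) auto
    finally have c: "0 \<le> cos t" "cos t \<le> pi/2 - t"
      using t by (auto intro!: cos_ge_zero)
    have "ell_denom x t = (cos t)^2 + (1 - x) * (sin t)^2"
      unfolding ell_denom_def using sin_cos_squared_add[of t] by (simp add: algebra_simps)
    also have "\<dots> \<le> (cos t)^2 + e^2"
      unfolding e using x by (simp add: mult_left_le_one_le abs_square_le_1)
    also have "\<dots> \<le> (cos t + e)^2"
      using c e by (simp add: power2_eq_square algebra_simps)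
    finally have "sqrt (ell_denom x t) \<le> cos t + e"
      using c e by (intro real_le_lsqrt) auto
    then have "sqrt (ell_denom x t) \<le> pi/2 - t + e"
      using c by linarith
    then show "1 / (pi/2 - t + e) \<le> ell_integrand (1/2) 0 x t"
      unfolding ell_integrand_def ell_denom_powr_neg_half[OF x(2)]
      using ell_denom_pos[OF x(2), of t] by (simp add: frac_le)
  qed
  moreover have "0 \<le> ln (pi/2 + e)"
    using e pi_gt3 by (intro ln_ge_zero) auto
  moreover have "ln e = ln (1 - x) / 2"
    unfolding e_def using x by (simp add: ln_sqrt)
  ultimately show ?thesis
    by simp
qed

lemma K_moment_0_tendsto_at_left_1: "filterlim (K_moment 0) at_top (at_left 1)"
proof (rule filterlim_at_top_mono)
  show "filterlim (\<lambda>x. - ln (1 - x) / 2) at_top (at_left (1::real))"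
    by real_asymp
  have "- ln (1 - x) / 2 \<le> K_moment 0 x" if "x \<in> {0<..<1}" for x
    using that by (intro K_moment_0_ge_neg_ln) auto
  then show "\<forall>\<^sub>F x in at_left 1. - ln (1 - x) / 2 \<le> K_moment 0 x"
    using eventually_at_left_real[of 0 "1::real"] by (auto elim!: eventually_mono)
qed

section \<open>The scaled second derivative of ln K\<close>

text \<open>Phi x = (1 - x)^2 * (ln K)''(x), expressed through the moments; see ln_h_deriv_has_derivative.\<close>

definition Phi :: "real \<Rightarrow> real" where
  "Phi x = (3/4 * K_moment 0 x * (K_moment 0 x - 2 * K_moment 1 x + K_moment 2 x)
      - 1/4 * (K_moment 0 x - K_moment 1 x)^2) / K_moment 0 x ^ 2"

lemma Phi_nonneg:
  assumes "0 \<le> x" "x < 1"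
  shows "0 \<le> Phi x"
proof -
  have "K_moment 1 x ^ 2 \<le> K_moment 0 x * K_moment 2 x"
    using assms by (intro ell_moment_cauchy_schwarz K_moment_0_pos)
  moreover have "3/4 * K_moment 0 x * (K_moment 0 x - 2 * K_moment 1 x + K_moment 2 x)
      - 1/4 * (K_moment 0 x - K_moment 1 x)^2
    = 1/2 * (K_moment 0 x - K_moment 1 x)^2 + 3/4 * (K_moment 0 x * K_moment 2 x - K_moment 1 x ^ 2)"
    by (simp add: algebra_simps power2_eq_square)
  ultimately show ?thesis
    unfolding Phi_def by simp
qed

lemma Phi_le_7_32:
  assumes x: "0 < x" "x < 1"
  shows "Phi x \<le> 7/32"
proof -
  define M where "M k = K_moment k x" for k
  have M0: "0 < M 0"
    unfolding M_def using x by (intro K_moment_0_pos) auto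
  have "(2 * real n + 1) * M n - 2 * (real n + 1) * (1 + x) * M (Suc n)
      + (2 * real n + 3) * x * M (Suc (Suc n)) = 0" for n
    unfolding M_def using ell_moment_recurrence[OF x(2)] .
  from this[of 0] this[of 1] this[of 2]
  have R1: "M 0 - 2 * (1 + x) * M 1 + 3 * x * M 2 = 0"
    and R2: "3 * M 1 - 4 * (1 + x) * M 2 + 5 * x * M 3 = 0"
    and R3: "5 * M 2 - 6 * (1 + x) * M 3 + 7 * x * M 4 = 0"
    by (simp_all add: numeral_eq_Suc algebra_simps)
  have P1: "0 \<le> 0 * M 0 + 1/4 * M 1 + (- 5/4) * M 2 + 2 * M 3 + (- 1) * M 4"
  proof (unfold M_def, rule ell_moment_quartic_nonneg[OF x(2)])
    fix y :: real assume "0 \<le> y" "y \<le> 1"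
    then have "0 \<le> y * (1 - y) * (y - 1/2)^2"
      by simp
    then show "0 \<le> 0 + 1/4 * y + (- 5/4) * y^2 + 2 * y^3 + (- 1) * y^4"
      by (simp add: field_simps power2_eq_square power3_eq_cube power4_eq_xxxx)
  qed
  have P2: "0 \<le> 0 * M 0 + 1/4 * M 1 + (- 1) * M 2 + 1 * M 3 + 0 * M 4"
  proof (unfold M_def, rule ell_moment_quartic_nonneg[OF x(2)])
    fix y :: real assume "0 \<le> y"
    then have "0 \<le> y * (y - 1/2)^2"
      by simp
    then show "0 \<le> 0 + 1/4 * y + (- 1) * y^2 + 1 * y^3 + 0 * y^4"
      by (simp add: field_simps power2_eq_square power3_eq_cube)
  qed
  have "0 \<le> (8 - 9 * x) * M 0 ^ 2 + 16 * (x - 1) * M 0 * M 1 + 8 * x * M 1 ^ 2"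
    using P1 P2 by (intro moment_quadratic_form_nonneg[OF x M0 R1 R2 R3]) simp_all
  also have "\<dots> = 32 * x * (7/32 * M 0 ^ 2 - (3/4 * M 0 * (M 0 - 2 * M 1 + M 2) - 1/4 * (M 0 - M 1)^2))"
    using R1 by algebra
  finally have "3/4 * M 0 * (M 0 - 2 * M 1 + M 2) - 1/4 * (M 0 - M 1)^2 \<le> 7/32 * M 0 ^ 2"
    using x by (simp add: zero_le_mult_iff)
  then show ?thesis
    unfolding Phi_def M_def[symmetric] using M0 by (simp add: divide_le_eq)
qed

lemma K_moments_at_0: "K_moment 0 0 = pi/2" "K_moment 1 0 = pi/4" "K_moment 2 0 = 3 * pi/16"
proof -
  have "ell_integrand (1/2) 0 0 = (\<lambda>t. 1)"
    by (rule ext) (simp add: ell_integrand_def ell_denom_def)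
  then show "K_moment 0 0 = pi/2"
    by (simp add: ell_moment_def)
  then show "K_moment 1 0 = pi/4" "K_moment 2 0 = 3 * pi/16"
    using ell_moment_recurrence[of 0 0] ell_moment_recurrence[of 0 1] by (simp_all add: numeral_eq_Suc)
qed

lemma Phi_tendsto_at_right_0: "(Phi \<longlongrightarrow> 7/32) (at_right 0)"
proof -
  have "isCont (K_moment k) 0" for k
    by (rule DERIV_isCont[OF ell_moment_has_derivative]) simp
  then have "isCont Phi 0"
    unfolding Phi_def using K_moments_at_0(1) by (intro continuous_intros) auto
  moreover have "Phi 0 = 7/32"
    unfolding Phi_def K_moments_at_0 by (simp add: field_simps power2_eq_square)
  ultimately have "(Phi \<longlongrightarrow> 7/32) (at 0)"
    by (simp add: isCont_def)
  then show ?thesis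
    by (rule tendsto_mono[OF at_within_le_at])
qed

lemma Phi_le_inverse_K_moment:
  assumes x: "0 \<le> x" "x < 1"
  shows "Phi x \<le> 3 * pi / 8 / K_moment 0 x"
proof -
  have M0: "0 < K_moment 0 x"
    using x by (rule K_moment_0_pos)
  have "3/4 * K_moment 0 x * (K_moment 0 x - 2 * K_moment 1 x + K_moment 2 x) \<le> 3/4 * K_moment 0 x * (pi/2)"
    using M0 K_moment_cos4_le[OF x] by (intro mult_left_mono) auto
  then have "3/4 * K_moment 0 x * (K_moment 0 x - 2 * K_moment 1 x + K_moment 2 x)
      - 1/4 * (K_moment 0 x - K_moment 1 x)^2 \<le> 3/4 * K_moment 0 x * (pi/2)"
    using zero_le_power2[of "K_moment 0 x - K_moment 1 x"] by linarith
  then have "Phi x \<le> 3/4 * K_moment 0 x * (pi/2) / K_moment 0 x ^ 2"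
    unfolding Phi_def by (intro divide_right_mono) auto
  also have "\<dots> = 3 * pi / 8 / K_moment 0 x"
    using M0 by (simp add: field_simps power2_eq_square)
  finally show ?thesis .
qed

lemma Phi_upper_bound_tendsto_at_left_1: "((\<lambda>x. 3 * pi / 8 / K_moment 0 x) \<longlongrightarrow> 0) (at_left 1)"
  by (intro tendsto_divide_0[OF tendsto_const] filterlim_at_top_imp_at_infinity
      K_moment_0_tendsto_at_left_1)

lemma Phi_bounded_above_iff: "(\<forall>x\<in>{0<..<1}. Phi x \<le> p) \<longleftrightarrow> 7/32 \<le> p"
proof
  assume "\<forall>x\<in>{0<..<1}. Phi x \<le> p"
  then have "\<forall>\<^sub>F x in at_right 0. Phi x \<le> p"
    using eventually_at_right_real[of 0 "1::real"] by (auto elim!: eventually_mono)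
  then show "7/32 \<le> p"
    by (rule tendsto_upperbound[OF Phi_tendsto_at_right_0]) (simp add: trivial_limit_at_right_real)
next
  assume "7/32 \<le> p"
  show "\<forall>x\<in>{0<..<1}. Phi x \<le> p"
  proof
    fix x :: real assume "x \<in> {0<..<1}"
    then have "Phi x \<le> 7/32"
      by (intro Phi_le_7_32) auto
    with \<open>7/32 \<le> p\<close> show "Phi x \<le> p"
      by linarith
  qed
qed

lemma Phi_bounded_below_iff: "(\<forall>x\<in>{0<..<1}. p \<le> Phi x) \<longleftrightarrow> p \<le> 0"
proof
  assume bound: "\<forall>x\<in>{0<..<1}. p \<le> Phi x"
  have "p \<le> 3 * pi / 8 / K_moment 0 x" if "x \<in> {0<..<1}" for x
  proof -
    have "p \<le> Phi x"
      using bound that by blast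
    also have "\<dots> \<le> 3 * pi / 8 / K_moment 0 x"
      using that by (intro Phi_le_inverse_K_moment) auto
    finally show ?thesis .
  qed
  then have "\<forall>\<^sub>F x in at_left 1. p \<le> 3 * pi / 8 / K_moment 0 x"
    using eventually_at_left_real[of 0 "1::real"] by (auto elim!: eventually_mono)
  then show "p \<le> 0"
    by (rule tendsto_lowerbound[OF Phi_upper_bound_tendsto_at_left_1]) (simp add: trivial_limit_at_left_real)
next
  assume "p \<le> 0"
  show "\<forall>x\<in>{0<..<1}. p \<le> Phi x"
  proof
    fix x :: real assume "x \<in> {0<..<1}"
    then have "0 \<le> Phi x"
      by (intro Phi_nonneg) auto
    with \<open>p \<le> 0\<close> show "p \<le> Phi x"
      by linarith
  qed
qed

section \<open>Log-concavity and log-convexity of h\<close>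

lemma h_eq: "x \<in> {0<..<1} \<Longrightarrow> h p x = (1 - x) powr p * K_moment 0 x"
  unfolding h_def by (simp add: K_eq_K_moment)

lemma h_pos: "x \<in> {0<..<1} \<Longrightarrow> 0 < h p x"
  using h_eq K_moment_0_pos by simp

lemma ln_h_eq:
  assumes "x \<in> {0<..<1}"
  shows "ln (h p x) = p * ln (1 - x) + ln (K_moment 0 x)"
  using assms K_moment_0_pos[of x] by (simp add: h_eq ln_mult ln_powr)

lemma K_moment_0_has_derivative:
  "x < 1 \<Longrightarrow> (K_moment 0 has_real_derivative ell_moment (3/2) 1 x / 2) (at x)"
  using ell_moment_has_derivative[of x "1/2" 0] by (simp add: One_nat_def)

lemma ln_h_has_derivative:
  assumes x: "x \<in> {0<..<1}"
  shows "((\<lambda>x. ln (h p x)) has_real_derivative - p / (1 - x) + ell_moment (3/2) 1 x / (2 * K_moment 0 x)) (at x)"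
proof -
  have M0: "0 < K_moment 0 x"
    using x by (intro K_moment_0_pos) auto
  have "((\<lambda>x. ln (1 - x)) has_real_derivative 1 / (1 - x) * (0 - 1)) (at x)"
    by (rule DERIV_chain2[OF DERIV_ln_divide]) (use x in \<open>auto intro!: derivative_eq_intros\<close>)
  moreover have "((\<lambda>x. ln (K_moment 0 x)) has_real_derivative
      1 / K_moment 0 x * (ell_moment (3/2) 1 x / 2)) (at x)"
    using x by (intro DERIV_chain2[OF DERIV_ln_divide[OF M0] K_moment_0_has_derivative]) simp
  ultimately have "((\<lambda>x. p * ln (1 - x) + ln (K_moment 0 x)) has_real_derivative
      p * (1 / (1 - x) * (0 - 1)) + 1 / K_moment 0 x * (ell_moment (3/2) 1 x / 2)) (at x)"
    by (intro DERIV_add DERIV_cmult)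
  then have "((\<lambda>x. p * ln (1 - x) + ln (K_moment 0 x)) has_real_derivative
      - p / (1 - x) + ell_moment (3/2) 1 x / (2 * K_moment 0 x)) (at x)"
    by (rule DERIV_cong) simp
  then show ?thesis
  proof (rule has_field_derivative_transform_within_open)
    show "p * ln (1 - y) + ln (K_moment 0 y) = ln (h p y)" if "y \<in> {0<..<1}" for y
      using ln_h_eq[OF that] by simp
  qed (use x in auto)
qed

lemma ln_h_deriv_has_derivative:
  assumes x: "x \<in> {0<..<1}"
  shows "((\<lambda>x. - p / (1 - x) + ell_moment (3/2) 1 x / (2 * K_moment 0 x)) has_real_derivative
      (Phi x - p) / (1 - x)^2) (at x)"
proof -
  have x1: "x < 1"
    using x by simp
  have M0: "0 < K_moment 0 x"
    using x by (intro K_moment_0_pos) auto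
  define Q where "Q = (3 * K_moment 0 x * ell_moment (5/2) 2 x - ell_moment (3/2) 1 x ^ 2)
      / (4 * K_moment 0 x ^ 2)"
  have dP: "((\<lambda>x. - p / (1 - x)) has_real_derivative - p / (1 - x)^2) (at x)"
    using x1 by (auto intro!: derivative_eq_intros simp: power2_eq_square)
  have "((\<lambda>x. ell_moment (3/2) 1 x / (2 * K_moment 0 x)) has_real_derivative
      (3/2 * ell_moment (5/2) 2 x * (2 * K_moment 0 x) - ell_moment (3/2) 1 x * (2 * (ell_moment (3/2) 1 x / 2)))
      / (2 * K_moment 0 x * (2 * K_moment 0 x))) (at x)"
    using M0 ell_moment_has_derivative[OF x1, of "3/2" 1] K_moment_0_has_derivative[OF x1]
    by (intro DERIV_divide DERIV_cmult) (simp_all add: numeral_eq_Suc)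
  then have dQ: "((\<lambda>x. ell_moment (3/2) 1 x / (2 * K_moment 0 x)) has_real_derivative Q) (at x)"
    unfolding Q_def by (rule DERIV_cong) (simp add: power2_eq_square algebra_simps)
  have "(1 - x)^2 * Q = Phi x"
  proof -
    have "(1 - x)^2 * (3 * K_moment 0 x * ell_moment (5/2) 2 x - ell_moment (3/2) 1 x ^ 2)
      = 3 * K_moment 0 x * ((1 - x)^2 * ell_moment (5/2) 2 x) - ((1 - x) * ell_moment (3/2) 1 x)^2"
      by algebra
    also have "\<dots> = 3 * K_moment 0 x * (K_moment 0 x - 2 * K_moment 1 x + K_moment 2 x)
        - (K_moment 0 x - K_moment 1 x)^2"
      unfolding ell_moment_3_2_reduce[OF x1] ell_moment_5_2_reduce[OF x1] ..
    finally have "(1 - x)^2 * Q = (3 * K_moment 0 x * (K_moment 0 x - 2 * K_moment 1 x + K_moment 2 x)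
        - (K_moment 0 x - K_moment 1 x)^2) / (4 * K_moment 0 x ^ 2)"
      unfolding Q_def by (simp add: times_divide_eq_right)
    also have "\<dots> = Phi x"
      unfolding Phi_def using M0 by (simp add: field_simps)
    finally show ?thesis .
  qed
  then have "- p / (1 - x)^2 + Q = (Phi x - p) / (1 - x)^2"
    using x1 by (simp add: field_simps)
  then show ?thesis
    by (rule DERIV_cong[OF DERIV_add[OF dP dQ]])
qed

lemma log_concave_h_iff: "log_concave_on {0<..<1} (h p) \<longleftrightarrow> (\<forall>x\<in>{0<..<1}. Phi x \<le> p)"
  unfolding log_concave_on_def
  using h_pos concave_on_open_interval_iff_deriv2_nonpos[OF ln_h_has_derivative ln_h_deriv_has_derivative]
  by (auto simp: divide_le_0_iff)

lemma log_convex_h_iff: "log_convex_on {0<..<1} (h p) \<longleftrightarrow> (\<forall>x\<in>{0<..<1}. p \<le> Phi x)"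
  unfolding log_convex_on_def
  using h_pos convex_on_open_interval_iff_deriv2_nonneg[OF ln_h_has_derivative ln_h_deriv_has_derivative]
  by (auto simp: zero_le_divide_iff)

theorem theorem3:
  fixes p :: real
  shows "(log_concave_on {0<..<1} (h p) \<longleftrightarrow> p \<ge> 7/32) \<and>
         (log_convex_on {0<..<1} (h p) \<longleftrightarrow> p \<le> 0)"
  using log_concave_h_iff Phi_bounded_above_iff log_convex_h_iff Phi_bounded_below_iff by simp

end
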